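(* Let $\{Z_n\}_{n\in\mathbb{N}}$ be a sequence of diagonal matrices $Z_n=\mathrm{diag}(z_1^{(n)},\ldots,z_n^{(n)})$ with $z_j^{(n)}\geq 1$ having bounded squeezing of degree $\zeta\ge0$, such that $\lambda(n)=\frac{1}{2n}\sum_{j=1}^n (z_j^{(n)}+1/z_j^{(n)})$ is uniformly bounded in $n$, and let $\{k_n\}$ be a sequence of subsystem sizes bounded of degree $\kappa\ge0$; write $k=k_n$. Define $f:U(n)\to\mathbb{R}$ by $f(U)=\mathrm{tr}\Big[\big((J_kM_{n,k}(U))^2+\lambda(n)^2I_{2k}\big)^2\Big]$. Equip $U(n)$ with the Hilbert–Schmidt distance $d(U,V)=\|U-V\|_2=\sqrt{\mathrm{tr}((U-V)^*(U-V))}$. Then the Lipschitz constant of $f$ is upper bounded by $Cn^{4\zeta+\kappa/2}$, where $C>0$ is a constant.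
   Context: $J_k=\begin{pmatrix}0_k&-I_k\\ I_k&0_k\end{pmatrix}$. For $U\in U(n)$, $\eta(U)=\begin{pmatrix}\mathrm{Re}(U)&\mathrm{Im}(U)\\ -\mathrm{Im}(U)&\mathrm{Re}(U)\end{pmatrix}$, $M_n(U)=\eta(U)(Z_n\oplus Z_n^{-1})\eta(U)^T$, and $M_{n,k}(U)$ is the $2k\times2k$ submatrix of $M_n(U)$ with rows and columns indexed by $\{1,\ldots,k\}\cup\{n+1,\ldots,n+k\}$. Bounded squeezing of degree $\zeta$: there is $C>0$ with $\|Z_n\|_\infty\le Cn^\zeta$ for all large $n$. Subsystem sizes $k_n\in\{1,\ldots,n\}$ bounded of degree $\kappa$: there is $K>0$ with $k_n\le Kn^\kappa$ for all large $n$. *)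

theory Defs
  imports "HOL-Analysis.Analysis"
begin

text \<open>Square matrices of varying size m are represented as functions
  nat => nat => 'a; only the entries with indices < m matter (0-based indices).\<close>

definition mmul :: "nat \<Rightarrow> (nat \<Rightarrow> nat \<Rightarrow> 'a::comm_semiring_0) \<Rightarrow> (nat \<Rightarrow> nat \<Rightarrow> 'a) \<Rightarrow> (nat \<Rightarrow> nat \<Rightarrow> 'a)" where
  "mmul m A B = (\<lambda>i j. \<Sum>l<m. A i l * B l j)"

definition mtrace :: "nat \<Rightarrow> (nat \<Rightarrow> nat \<Rightarrow> 'a::comm_monoid_add) \<Rightarrow> 'a" where
  "mtrace m A = (\<Sum>i<m. A i i)"

definition mtransp :: "(nat \<Rightarrow> nat \<Rightarrow> 'a) \<Rightarrow> (nat \<Rightarrow> nat \<Rightarrow> 'a)" where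
  "mtransp A = (\<lambda>i j. A j i)"

definition madj :: "(nat \<Rightarrow> nat \<Rightarrow> complex) \<Rightarrow> (nat \<Rightarrow> nat \<Rightarrow> complex)" where
  "madj A = (\<lambda>i j. cnj (A j i))"

definition mid :: "(nat \<Rightarrow> nat \<Rightarrow> 'a::{zero,one})" where
  "mid = (\<lambda>i j. if i = j then 1 else 0)"

definition unitary_mat :: "nat \<Rightarrow> (nat \<Rightarrow> nat \<Rightarrow> complex) \<Rightarrow> bool" where
  "unitary_mat n U \<longleftrightarrow> (\<forall>i<n. \<forall>j<n. mmul n (madj U) U i j = mid i j)"

definition hs_dist :: "nat \<Rightarrow> (nat \<Rightarrow> nat \<Rightarrow> complex) \<Rightarrow> (nat \<Rightarrow> nat \<Rightarrow> complex) \<Rightarrow> real" where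
  "hs_dist n U V = sqrt (Re (mtrace n (mmul n (madj (\<lambda>i j. U i j - V i j)) (\<lambda>i j. U i j - V i j))))"

text \<open>J_k = [[0,-I_k],[I_k,0]] (size 2k).\<close>
definition Jmat :: "nat \<Rightarrow> (nat \<Rightarrow> nat \<Rightarrow> real)" where
  "Jmat k = (\<lambda>i j. if i < k \<and> j = i + k then -1
                   else if k \<le> i \<and> i < 2*k \<and> j + k = i then 1 else 0)"

text \<open>eta(U) = [[Re U, Im U],[-Im U, Re U]] (size 2n).\<close>
definition eta :: "nat \<Rightarrow> (nat \<Rightarrow> nat \<Rightarrow> complex) \<Rightarrow> (nat \<Rightarrow> nat \<Rightarrow> real)" where
  "eta n U = (\<lambda>i j. if i < n \<and> j < n then Re (U i j)
                   else if i < n then Im (U i (j - n))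
                   else if j < n then - Im (U (i - n) j)
                   else Re (U (i - n) (j - n)))"

text \<open>Z_n \<oplus> Z_n^{-1} with Z_n = diag(z n 0, ..., z n (n-1)).\<close>
definition Zblock :: "(nat \<Rightarrow> nat \<Rightarrow> real) \<Rightarrow> nat \<Rightarrow> (nat \<Rightarrow> nat \<Rightarrow> real)" where
  "Zblock z n = (\<lambda>i j. if i \<noteq> j then 0 else if i < n then z n i else 1 / z n (i - n))"

definition Mmat :: "(nat \<Rightarrow> nat \<Rightarrow> real) \<Rightarrow> nat \<Rightarrow> (nat \<Rightarrow> nat \<Rightarrow> complex) \<Rightarrow> (nat \<Rightarrow> nat \<Rightarrow> real)" where
  "Mmat z n U = mmul (2*n) (mmul (2*n) (eta n U) (Zblock z n)) (mtransp (eta n U))"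

text \<open>Index map {0..2k-1} -> {0..k-1} \<union> {n..n+k-1}.\<close>
definition subidx :: "nat \<Rightarrow> nat \<Rightarrow> nat \<Rightarrow> nat" where
  "subidx n k i = (if i < k then i else n + (i - k))"

definition Msub :: "(nat \<Rightarrow> nat \<Rightarrow> real) \<Rightarrow> nat \<Rightarrow> nat \<Rightarrow> (nat \<Rightarrow> nat \<Rightarrow> complex) \<Rightarrow> (nat \<Rightarrow> nat \<Rightarrow> real)" where
  "Msub z n k U = (\<lambda>i j. Mmat z n U (subidx n k i) (subidx n k j))"

definition lam :: "(nat \<Rightarrow> nat \<Rightarrow> real) \<Rightarrow> nat \<Rightarrow> real" where
  "lam z n = (1 / (2 * real n)) * (\<Sum>j<n. z n j + 1 / z n j)"

text \<open>Operator norm of the diagonal matrix Z_n: the largest |z_j^(n)|.\<close>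
definition Znorm :: "(nat \<Rightarrow> nat \<Rightarrow> real) \<Rightarrow> nat \<Rightarrow> real" where
  "Znorm z n = Max ((\<lambda>j. \<bar>z n j\<bar>) ` {..<n})"

definition fobj :: "(nat \<Rightarrow> nat \<Rightarrow> real) \<Rightarrow> nat \<Rightarrow> nat \<Rightarrow> (nat \<Rightarrow> nat \<Rightarrow> complex) \<Rightarrow> real" where
  "fobj z n k U =
     (let A = mmul (2*k) (Jmat k) (Msub z n k U);
          B = (\<lambda>i j. mmul (2*k) A A i j + (lam z n)^2 * mid i j)
      in mtrace (2*k) (mmul (2*k) B B))"

end

theory Submission
  imports Defs
begin

text \<open>Write A_U = J_k M_{n,k}(U) and B_U = A_U^2 + lambda(n)^2 I, so that f(U) = tr(B_U^2).
  As eta(U) is orthogonal, M_n(U), its principal submatrices and A_U have operator norm at most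
  ||Z_n||, and B_U has operator norm at most ||Z_n||^2 + lambda(n)^2. Differences of products
  telescope, X^2 - Y^2 = X (X - Y) + (X - Y) Y, so with ||X Y||_2 <= ||X||_op ||Y||_2,
  |tr X| <= sqrt (2k) ||X||_2 and ||eta(U) - eta(V)||_2 = sqrt 2 d(U,V) one gets
  |f(U) - f(V)| <= 16 sqrt k ||Z_n||^2 (||Z_n||^2 + lambda(n)^2) d(U,V),
  and the growth hypotheses turn the constant into O(n^(4 zeta + kappa/2)).\<close>

section \<open>Euclidean, operator and Hilbert--Schmidt norms of truncated matrices\<close>

definition vec_norm :: "nat \<Rightarrow> (nat \<Rightarrow> real) \<Rightarrow> real" where
  "vec_norm m x = L2_set x {..<m}"

definition mat_vec :: "nat \<Rightarrow> (nat \<Rightarrow> nat \<Rightarrow> real) \<Rightarrow> (nat \<Rightarrow> real) \<Rightarrow> nat \<Rightarrow> real" where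
  "mat_vec m A x = (\<lambda>i. \<Sum>j<m. A i j * x j)"

definition op_norm_le :: "nat \<Rightarrow> (nat \<Rightarrow> nat \<Rightarrow> real) \<Rightarrow> real \<Rightarrow> bool" where
  "op_norm_le m A c \<longleftrightarrow> (\<forall>x. vec_norm m (mat_vec m A x) \<le> c * vec_norm m x)"

definition hs_norm :: "nat \<Rightarrow> (nat \<Rightarrow> nat \<Rightarrow> real) \<Rightarrow> real" where
  "hs_norm m A = sqrt (\<Sum>i<m. \<Sum>j<m. (A i j)\<^sup>2)"

lemma vec_norm_square: "(vec_norm m x)\<^sup>2 = (\<Sum>i<m. (x i)\<^sup>2)"
  unfolding vec_norm_def L2_set_def by (simp add: sum_nonneg)

lemma vec_norm_nonneg: "vec_norm m x \<ge> 0"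
  unfolding vec_norm_def by simp

lemma inner_le_vec_norm: "(\<Sum>i<m. x i * y i) \<le> vec_norm m x * vec_norm m y"
proof -
  have "(\<Sum>i<m. x i * y i) \<le> (\<Sum>i<m. \<bar>x i\<bar> * \<bar>y i\<bar>)"
    by (rule sum_mono) (metis abs_ge_self abs_mult)
  also have "\<dots> \<le> vec_norm m x * vec_norm m y"
    unfolding vec_norm_def by (rule L2_set_mult_ineq)
  finally show ?thesis .
qed

lemma mat_vec_mmul: "mat_vec m (mmul m A B) x = mat_vec m A (mat_vec m B x)"
  unfolding mat_vec_def mmul_def
  by (auto simp: sum_distrib_left sum_distrib_right mult.assoc intro!: ext sum.swap[THEN trans])

lemma mtransp_mmul: "mtransp (mmul m A B) = mmul m (mtransp B) (mtransp A)"
  unfolding mtransp_def mmul_def by (auto simp: mult.commute)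

lemma op_norm_le_mmul:
  "op_norm_le m A a \<Longrightarrow> op_norm_le m B b \<Longrightarrow> 0 \<le> a \<Longrightarrow> op_norm_le m (mmul m A B) (a * b)"
  unfolding op_norm_le_def mat_vec_mmul
  by (metis (no_types, opaque_lifting) mult.assoc mult_left_mono order_trans)

lemma op_norm_le_add:
  assumes "op_norm_le m A a" "op_norm_le m B b"
  shows "op_norm_le m (\<lambda>i j. A i j + B i j) (a + b)"
  unfolding op_norm_le_def
proof
  fix x
  have "mat_vec m (\<lambda>i j. A i j + B i j) x = (\<lambda>i. mat_vec m A x i + mat_vec m B x i)"
    unfolding mat_vec_def by (auto simp: distrib_right sum.distrib)
  then have "vec_norm m (mat_vec m (\<lambda>i j. A i j + B i j) x)
      \<le> vec_norm m (mat_vec m A x) + vec_norm m (mat_vec m B x)"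
    unfolding vec_norm_def by (simp add: L2_set_triangle_ineq)
  also have "\<dots> \<le> (a + b) * vec_norm m x"
    using assms unfolding op_norm_le_def by (simp add: distrib_right add_mono)
  finally show "vec_norm m (mat_vec m (\<lambda>i j. A i j + B i j) x) \<le> (a + b) * vec_norm m x" .
qed

lemma op_norm_le_transp:
  assumes "op_norm_le m A c" "c \<ge> 0"
  shows "op_norm_le m (mtransp A) c"
  unfolding op_norm_le_def
proof
  fix y
  define w where "w = mat_vec m (mtransp A) y"
  have "(vec_norm m w)\<^sup>2 = (\<Sum>i<m. w i * (\<Sum>l<m. A l i * y l))"
    unfolding vec_norm_square by (simp add: w_def mat_vec_def mtransp_def power2_eq_square)
  also have "\<dots> = (\<Sum>l<m. mat_vec m A w l * y l)"
    unfolding mat_vec_def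
    by (auto simp: sum_distrib_left sum_distrib_right mult_ac intro!: sum.swap[THEN trans])
  also have "\<dots> \<le> vec_norm m (mat_vec m A w) * vec_norm m y"
    by (rule inner_le_vec_norm)
  also have "\<dots> \<le> c * vec_norm m w * vec_norm m y"
    using assms(1) unfolding op_norm_le_def by (simp add: mult_right_mono vec_norm_nonneg)
  finally have "(vec_norm m w)\<^sup>2 \<le> c * vec_norm m w * vec_norm m y" .
  then show "vec_norm m w \<le> c * vec_norm m y"
    using assms(2) vec_norm_nonneg[of m w] vec_norm_nonneg[of m y]
    by (cases "vec_norm m w = 0") (auto simp: power2_eq_square mult_ac)
qed

lemma op_norm_le_diag:
  assumes "\<And>i j. i < m \<Longrightarrow> j < m \<Longrightarrow> i \<noteq> j \<Longrightarrow> D i j = 0"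
    and "\<And>i. i < m \<Longrightarrow> \<bar>D i i\<bar> \<le> c"
  shows "op_norm_le m D c"
  unfolding op_norm_le_def
proof
  fix x
  have entry: "mat_vec m D x i = D i i * x i" if "i < m" for i
  proof -
    have "mat_vec m D x i = (\<Sum>j<m. if j = i then D i i * x i else 0)"
      unfolding mat_vec_def using assms(1) that by (intro sum.cong) auto
    then show ?thesis using that by simp
  qed
  have "(\<Sum>i<m. (mat_vec m D x i)\<^sup>2) \<le> (\<Sum>i<m. c\<^sup>2 * (x i)\<^sup>2)"
  proof (intro sum_mono)
    fix i assume i: "i \<in> {..<m}"
    have "(D i i)\<^sup>2 \<le> c\<^sup>2"
      using assms(2) i by (metis abs_ge_zero power2_abs power_mono lessThan_iff)
    then show "(mat_vec m D x i)\<^sup>2 \<le> c\<^sup>2 * (x i)\<^sup>2"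
      using entry i by (simp add: power_mult_distrib mult_right_mono)
  qed
  then have "(vec_norm m (mat_vec m D x))\<^sup>2 \<le> (c * vec_norm m x)\<^sup>2"
    by (simp add: vec_norm_square power_mult_distrib sum_distrib_left)
  moreover have "m = 0 \<or> c \<ge> 0"
    using assms(2)[of 0] abs_ge_zero[of "D 0 0"] by (cases "m = 0") linarith+
  ultimately show "vec_norm m (mat_vec m D x) \<le> c * vec_norm m x"
    using vec_norm_nonneg by (auto simp: vec_norm_def intro: power2_le_imp_le)
qed

lemma op_norm_le_scaled_mid: "op_norm_le m (\<lambda>i j. c * mid i j) \<bar>c\<bar>"
  by (rule op_norm_le_diag) (auto simp: mid_def)

lemma hs_norm_nonneg: "hs_norm m A \<ge> 0"
  unfolding hs_norm_def by (simp add: sum_nonneg)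

lemma hs_norm_columns: "hs_norm m A = sqrt (\<Sum>j<m. (vec_norm m (\<lambda>i. A i j))\<^sup>2)"
  unfolding hs_norm_def vec_norm_square by (subst sum.swap) simp

lemma hs_norm_transp: "hs_norm m (mtransp A) = hs_norm m A"
  unfolding hs_norm_def mtransp_def by (subst sum.swap) simp

lemma hs_norm_add: "hs_norm m (\<lambda>i j. A i j + B i j) \<le> hs_norm m A + hs_norm m B"
proof -
  have L2: "hs_norm m X = L2_set (\<lambda>p. X (fst p) (snd p)) ({..<m} \<times> {..<m})" for X
    unfolding hs_norm_def L2_set_def by (simp add: sum.cartesian_product split_def)
  show ?thesis
    unfolding L2 by (rule L2_set_triangle_ineq)
qed

lemma hs_norm_mmul_left:
  assumes "op_norm_le m A a" "0 \<le> a"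
  shows "hs_norm m (mmul m A B) \<le> a * hs_norm m B"
proof -
  have "(vec_norm m (\<lambda>i. mmul m A B i j))\<^sup>2 \<le> (a * vec_norm m (\<lambda>i. B i j))\<^sup>2" for j
  proof -
    have "(\<lambda>i. mmul m A B i j) = mat_vec m A (\<lambda>i. B i j)"
      unfolding mmul_def mat_vec_def by simp
    then show ?thesis
      using assms(1) unfolding op_norm_le_def by (simp add: power_mono vec_norm_nonneg)
  qed
  then have "hs_norm m (mmul m A B) \<le> sqrt (\<Sum>j<m. (a * vec_norm m (\<lambda>i. B i j))\<^sup>2)"
    unfolding hs_norm_columns by (simp add: sum_mono)
  also have "\<dots> = a * hs_norm m B"
    unfolding hs_norm_columns using assms(2)
    by (simp add: power_mult_distrib sum_distrib_left[symmetric] real_sqrt_mult)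
  finally show ?thesis .
qed

lemma hs_norm_mmul_right:
  assumes "op_norm_le m B b" "0 \<le> b"
  shows "hs_norm m (mmul m A B) \<le> hs_norm m A * b"
proof -
  have "hs_norm m (mmul m A B) = hs_norm m (mmul m (mtransp B) (mtransp A))"
    by (metis hs_norm_transp mtransp_mmul)
  also have "\<dots> \<le> b * hs_norm m (mtransp A)"
    by (rule hs_norm_mmul_left[OF op_norm_le_transp[OF assms] assms(2)])
  finally show ?thesis
    by (simp add: hs_norm_transp mult.commute)
qed

lemma hs_norm_square_diff:
  assumes "op_norm_le m X a" "op_norm_le m Y a" "0 \<le> a"
  shows "hs_norm m (\<lambda>i j. mmul m X X i j - mmul m Y Y i j) \<le> 2 * a * hs_norm m (\<lambda>i j. X i j - Y i j)"
proof -
  let ?D = "\<lambda>i j. X i j - Y i j"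
  have "(\<lambda>i j. mmul m X X i j - mmul m Y Y i j) = (\<lambda>i j. mmul m X ?D i j + mmul m ?D Y i j)"
    unfolding mmul_def by (auto simp: sum.distrib[symmetric] algebra_simps intro!: ext sum.cong)
  moreover have "hs_norm m (\<lambda>i j. mmul m X ?D i j + mmul m ?D Y i j)
      \<le> hs_norm m (mmul m X ?D) + hs_norm m (mmul m ?D Y)"
    by (rule hs_norm_add)
  moreover have "\<dots> \<le> a * hs_norm m ?D + hs_norm m ?D * a"
    by (intro add_mono hs_norm_mmul_left hs_norm_mmul_right assms)
  ultimately show ?thesis
    by simp
qed

lemma abs_mtrace_le_hs_norm: "\<bar>mtrace m X\<bar> \<le> sqrt m * hs_norm m X"
proof -
  have "\<bar>mtrace m X\<bar> \<le> (\<Sum>i<m. \<bar>1::real\<bar> * \<bar>X i i\<bar>)"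
    unfolding mtrace_def by (simp add: sum_abs)
  also have "\<dots> \<le> L2_set (\<lambda>_. 1) {..<m} * L2_set (\<lambda>i. X i i) {..<m}"
    by (rule L2_set_mult_ineq)
  also have "L2_set (\<lambda>_. 1) {..<m} = sqrt m"
    by (simp add: L2_set_constant)
  also have "L2_set (\<lambda>i. X i i) {..<m} \<le> hs_norm m X"
    unfolding L2_set_def hs_norm_def by (intro real_sqrt_le_mono sum_mono member_le_sum) auto
  finally show ?thesis
    by (simp add: mult_left_mono)
qed

lemma abs_mtrace_quartic_diff:
  fixes c :: real
  assumes "op_norm_le m X a" "op_norm_le m Y a" "0 \<le> a"
  defines "P \<equiv> \<lambda>W i j. mmul m W W i j + c * mid i j"
  shows "\<bar>mtrace m (mmul m (P X) (P X)) - mtrace m (mmul m (P Y) (P Y))\<bar>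
    \<le> 4 * sqrt m * a * (a\<^sup>2 + \<bar>c\<bar>) * hs_norm m (\<lambda>i j. X i j - Y i j)"
proof -
  have op_P: "op_norm_le m (P W) (a\<^sup>2 + \<bar>c\<bar>)" if "op_norm_le m W a" for W
    using op_norm_le_add[OF op_norm_le_mmul[OF that that assms(3)] op_norm_le_scaled_mid]
    by (simp add: P_def power2_eq_square)
  have "\<bar>mtrace m (mmul m (P X) (P X)) - mtrace m (mmul m (P Y) (P Y))\<bar>
      = \<bar>mtrace m (\<lambda>i j. mmul m (P X) (P X) i j - mmul m (P Y) (P Y) i j)\<bar>"
    unfolding mtrace_def by (simp add: sum_subtractf)
  also have "\<dots> \<le> sqrt m * hs_norm m (\<lambda>i j. mmul m (P X) (P X) i j - mmul m (P Y) (P Y) i j)"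
    by (rule abs_mtrace_le_hs_norm)
  also have "\<dots> \<le> sqrt m * (2 * (a\<^sup>2 + \<bar>c\<bar>) * hs_norm m (\<lambda>i j. P X i j - P Y i j))"
    by (intro mult_left_mono hs_norm_square_diff op_P assms) auto
  also have "(\<lambda>i j. P X i j - P Y i j) = (\<lambda>i j. mmul m X X i j - mmul m Y Y i j)"
    by (simp add: P_def)
  also have "sqrt m * (2 * (a\<^sup>2 + \<bar>c\<bar>) * hs_norm m \<dots>)
      \<le> sqrt m * (2 * (a\<^sup>2 + \<bar>c\<bar>) * (2 * a * hs_norm m (\<lambda>i j. X i j - Y i j)))"
    by (intro mult_left_mono hs_norm_square_diff assms) auto
  finally show ?thesis
    by (simp add: algebra_simps)
qed

section \<open>Principal submatrices\<close>

lemma sum_reindex_le: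
  fixes s :: "nat \<Rightarrow> nat" and g :: "nat \<Rightarrow> real"
  assumes "inj_on s {..<m}" "s ` {..<m} \<subseteq> {..<N}" "\<And>l. g l \<ge> 0"
  shows "(\<Sum>i<m. g (s i)) \<le> (\<Sum>l<N. g l)"
proof -
  have "(\<Sum>i<m. g (s i)) = (\<Sum>l\<in>s ` {..<m}. g l)"
    using assms(1) by (simp add: sum.reindex)
  also have "\<dots> \<le> (\<Sum>l<N. g l)"
    using assms by (intro sum_mono2) auto
  finally show ?thesis .
qed

lemma sum_reindex_eq:
  fixes s :: "nat \<Rightarrow> nat" and g :: "nat \<Rightarrow> real"
  assumes "inj_on s {..<m}" "s ` {..<m} \<subseteq> {..<N}" "\<And>l. l \<notin> s ` {..<m} \<Longrightarrow> g l = 0"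
  shows "(\<Sum>l<N. g l) = (\<Sum>i<m. g (s i))"
proof -
  have "(\<Sum>l<N. g l) = (\<Sum>l\<in>s ` {..<m}. g l)"
    using assms by (intro sum.mono_neutral_right) auto
  also have "\<dots> = (\<Sum>i<m. g (s i))"
    using assms(1) by (simp add: sum.reindex)
  finally show ?thesis .
qed

lemma hs_norm_submatrix:
  assumes "inj_on s {..<m}" "s ` {..<m} \<subseteq> {..<N}"
  shows "hs_norm m (\<lambda>i j. D (s i) (s j)) \<le> hs_norm N D"
proof -
  have "(\<Sum>i<m. \<Sum>j<m. (D (s i) (s j))\<^sup>2) \<le> (\<Sum>i<m. \<Sum>l<N. (D (s i) l)\<^sup>2)"
    by (intro sum_mono sum_reindex_le[OF assms]) auto
  also have "\<dots> \<le> (\<Sum>l'<N. \<Sum>l<N. (D l' l)\<^sup>2)"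
    by (intro sum_reindex_le[OF assms, where g="\<lambda>l'. \<Sum>l<N. (D l' l)\<^sup>2"] sum_nonneg) auto
  finally show ?thesis
    unfolding hs_norm_def by simp
qed

lemma op_norm_le_submatrix:
  assumes "inj_on s {..<m}" "s ` {..<m} \<subseteq> {..<N}" "op_norm_le N M c"
  shows "op_norm_le m (\<lambda>i j. M (s i) (s j)) c"
  unfolding op_norm_le_def
proof
  fix x :: "nat \<Rightarrow> real"
  let ?M = "\<lambda>i j. M (s i) (s j)"
  define y where "y l = (if l \<in> s ` {..<m} then x (the_inv_into {..<m} s l) else 0)" for l
  have y_s: "y (s j) = x j" if "j < m" for j
    using that assms(1) by (simp add: y_def the_inv_into_f_f)
  have mat_vec_y: "mat_vec m ?M x i = mat_vec N M y (s i)" for i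
  proof -
    have "mat_vec N M y (s i) = (\<Sum>j<m. M (s i) (s j) * y (s j))"
      unfolding mat_vec_def by (rule sum_reindex_eq[OF assms(1,2)]) (simp add: y_def)
    then show ?thesis
      unfolding mat_vec_def using y_s by simp
  qed
  have "(\<Sum>l<N. (y l)\<^sup>2) = (\<Sum>j<m. (y (s j))\<^sup>2)"
    by (rule sum_reindex_eq[OF assms(1,2)]) (simp add: y_def)
  then have vec_norm_y: "vec_norm N y = vec_norm m x"
    using y_s by (simp add: vec_norm_def L2_set_def)
  have "(\<Sum>i<m. (mat_vec m ?M x i)\<^sup>2) \<le> (\<Sum>l<N. (mat_vec N M y l)\<^sup>2)"
    unfolding mat_vec_y by (rule sum_reindex_le[OF assms(1,2)]) simp
  then have "vec_norm m (mat_vec m ?M x) \<le> vec_norm N (mat_vec N M y)"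
    unfolding vec_norm_def L2_set_def by simp
  also have "\<dots> \<le> c * vec_norm N y"
    using assms(3) op_norm_le_def by blast
  finally show "vec_norm m (mat_vec m ?M x) \<le> c * vec_norm m x"
    unfolding vec_norm_y .
qed

lemma subidx_inj: "k \<le> n \<Longrightarrow> inj_on (subidx n k) {..<2*k}"
  unfolding inj_on_def subidx_def by auto

lemma subidx_range: "k \<le> n \<Longrightarrow> subidx n k ` {..<2*k} \<subseteq> {..<2*n}"
  unfolding subidx_def by auto

section \<open>The orthogonal matrix \<open>\<eta>(U)\<close>\<close>

lemma sum_lessThan_double:
  fixes f :: "nat \<Rightarrow> 'a::comm_monoid_add"
  shows "(\<Sum>i<2*n. f i) = (\<Sum>i<n. f i) + (\<Sum>i<n. f (n + i))"
proof -
  have "(\<Sum>i<2*n. f i) = sum f {0..<n} + sum f {n..<n+n}"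
    by (simp add: mult_2 lessThan_atLeast0 sum.atLeastLessThan_concat)
  also have "sum f {n..<n+n} = (\<Sum>i<n. f (n + i))"
    using sum.shift_bounds_nat_ivl[of f 0 n n] by (simp add: lessThan_atLeast0 add.commute)
  finally show ?thesis
    by (simp add: lessThan_atLeast0)
qed

lemma unitary_mat_columns_Re_Im:
  assumes "unitary_mat n U" "i < n" "j < n"
  shows "(\<Sum>l<n. Re (U l i) * Re (U l j) + Im (U l i) * Im (U l j)) = (if i = j then 1 else 0)"
    and "(\<Sum>l<n. Re (U l i) * Im (U l j) - Im (U l i) * Re (U l j)) = 0"
proof -
  have col: "(\<Sum>l<n. cnj (U l i) * U l j) = mid i j"
    using assms unfolding unitary_mat_def mmul_def madj_def by simp
  from arg_cong[OF col, of Re]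
  show "(\<Sum>l<n. Re (U l i) * Re (U l j) + Im (U l i) * Im (U l j)) = (if i = j then 1 else 0)"
    by (simp add: Re_sum mid_def)
  from arg_cong[OF col, of Im]
  show "(\<Sum>l<n. Re (U l i) * Im (U l j) - Im (U l i) * Re (U l j)) = 0"
    by (simp add: Im_sum mid_def)
qed

lemma eta_orthonormal_columns:
  assumes "unitary_mat n U" "i < 2*n" "j < 2*n"
  shows "(\<Sum>l<2*n. eta n U l i * eta n U l j) = mid i j"
proof -
  let ?S = "\<lambda>f. \<Sum>l<n. f l"
  have split: "(\<Sum>l<2*n. eta n U l i * eta n U l j)
      = ?S (\<lambda>l. eta n U l i * eta n U l j + eta n U (n+l) i * eta n U (n+l) j)"
    by (simp add: sum_lessThan_double sum.distrib)
  consider "i < n" "j < n" | "i < n" "\<not> j < n" | "\<not> i < n" "j < n" | "\<not> i < n" "\<not> j < n"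
    by blast
  then show ?thesis
  proof cases
    case 1
    then have "?S (\<lambda>l. eta n U l i * eta n U l j + eta n U (n+l) i * eta n U (n+l) j)
        = ?S (\<lambda>l. Re (U l i) * Re (U l j) + Im (U l i) * Im (U l j))"
      by (intro sum.cong) (auto simp: eta_def)
    then show ?thesis
      using split unitary_mat_columns_Re_Im(1)[OF assms(1) 1] by (simp add: mid_def)
  next
    case 2
    then have "?S (\<lambda>l. eta n U l i * eta n U l j + eta n U (n+l) i * eta n U (n+l) j)
        = ?S (\<lambda>l. Re (U l i) * Im (U l (j-n)) - Im (U l i) * Re (U l (j-n)))"
      by (intro sum.cong) (auto simp: eta_def)
    then show ?thesis
      using split unitary_mat_columns_Re_Im(2)[OF assms(1) \<open>i < n\<close>, of "j-n"] 2 assms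
      by (simp add: mid_def)
  next
    case 3
    then have "?S (\<lambda>l. eta n U l i * eta n U l j + eta n U (n+l) i * eta n U (n+l) j)
        = ?S (\<lambda>l. Re (U l j) * Im (U l (i-n)) - Im (U l j) * Re (U l (i-n)))"
      by (intro sum.cong) (auto simp: eta_def)
    then show ?thesis
      using split unitary_mat_columns_Re_Im(2)[OF assms(1) \<open>j < n\<close>, of "i-n"] 3 assms
      by (simp add: mid_def)
  next
    case 4
    then have "?S (\<lambda>l. eta n U l i * eta n U l j + eta n U (n+l) i * eta n U (n+l) j)
        = ?S (\<lambda>l. Re (U l (i-n)) * Re (U l (j-n)) + Im (U l (i-n)) * Im (U l (j-n)))"
      by (intro sum.cong) (auto simp: eta_def)
    then show ?thesis
      using split unitary_mat_columns_Re_Im(1)[OF assms(1), of "i-n" "j-n"] 4 assms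
      by (auto simp: mid_def)
  qed
qed

lemma vec_norm_mat_vec_orthonormal:
  assumes "\<And>i j. i < m \<Longrightarrow> j < m \<Longrightarrow> (\<Sum>l<m. A l i * A l j) = mid i j"
  shows "vec_norm m (mat_vec m A x) = vec_norm m x"
proof -
  have "(\<Sum>l<m. (mat_vec m A x l)\<^sup>2) = (\<Sum>l<m. \<Sum>i<m. \<Sum>j<m. (A l i * x i) * (A l j * x j))"
    by (simp add: mat_vec_def power2_eq_square sum_product)
  also have "\<dots> = (\<Sum>i<m. \<Sum>j<m. \<Sum>l<m. (A l i * x i) * (A l j * x j))"
    by (subst sum.swap) (intro sum.cong refl sum.swap)
  also have "\<dots> = (\<Sum>i<m. \<Sum>j<m. x i * x j * (\<Sum>l<m. A l i * A l j))"
    by (simp add: sum_distrib_left mult_ac)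
  also have "\<dots> = (\<Sum>i<m. \<Sum>j<m. if j = i then x i * x i else 0)"
    using assms by (intro sum.cong refl) (auto simp: mid_def)
  also have "\<dots> = (\<Sum>i<m. (x i)\<^sup>2)"
    by (simp add: power2_eq_square)
  finally show ?thesis
    unfolding vec_norm_def L2_set_def by simp
qed

lemma op_norm_le_eta: "unitary_mat n U \<Longrightarrow> op_norm_le (2*n) (eta n U) 1"
  unfolding op_norm_le_def
  using vec_norm_mat_vec_orthonormal[of "2*n" "eta n U"] eta_orthonormal_columns by simp

lemma hs_norm_eta_diff: "hs_norm (2*n) (\<lambda>i j. eta n U i j - eta n V i j) = sqrt 2 * hs_dist n U V"
proof -
  define W where "W = (\<lambda>i j. U i j - V i j)"
  have eta_W: "(\<lambda>i j. eta n U i j - eta n V i j) = eta n W"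
    unfolding eta_def W_def by (auto intro!: ext)
  have "(\<Sum>i<2*n. \<Sum>j<2*n. (eta n W i j)\<^sup>2)
      = (\<Sum>i<n. \<Sum>j<n. (eta n W i j)\<^sup>2 + (eta n W i (n+j))\<^sup>2
                      + (eta n W (n+i) j)\<^sup>2 + (eta n W (n+i) (n+j))\<^sup>2)"
    by (simp add: sum_lessThan_double sum.distrib)
  also have "\<dots> = 2 * (\<Sum>i<n. \<Sum>j<n. (Re (W i j))\<^sup>2 + (Im (W i j))\<^sup>2)"
    by (simp add: sum_distrib_left eta_def)
  also have "(\<Sum>i<n. \<Sum>j<n. (Re (W i j))\<^sup>2 + (Im (W i j))\<^sup>2) = Re (mtrace n (mmul n (madj W) W))"
    unfolding mtrace_def mmul_def madj_def
    by (simp add: Re_sum power2_eq_square) (rule sum.swap)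
  finally show ?thesis
    unfolding eta_W hs_norm_def hs_dist_def W_def[symmetric] by (simp add: real_sqrt_mult)
qed

lemma hs_dist_nonneg: "hs_dist n U V \<ge> 0"
  using hs_norm_eta_diff[of n U V] hs_norm_nonneg[of "2*n" "\<lambda>i j. eta n U i j - eta n V i j"]
  by (simp add: zero_le_mult_iff)

section \<open>Operator-norm bounds for \<open>Z\<^sub>n\<close>, \<open>M\<^sub>n(U)\<close> and \<open>J\<^sub>k\<close>\<close>

lemma abs_le_Znorm: "j < n \<Longrightarrow> \<bar>z n j\<bar> \<le> Znorm z n"
  unfolding Znorm_def by (intro Max_ge) auto

lemma Znorm_ge_1: "(\<And>j. j < n \<Longrightarrow> z n j \<ge> 1) \<Longrightarrow> n \<ge> 1 \<Longrightarrow> Znorm z n \<ge> 1"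
  using abs_le_Znorm[of 0 n z] by fastforce

lemma op_norm_le_Zblock:
  assumes "\<And>j. j < n \<Longrightarrow> z n j \<ge> 1" "n \<ge> 1"
  shows "op_norm_le (2*n) (Zblock z n) (Znorm z n)"
proof (rule op_norm_le_diag)
  fix i assume i: "i < 2*n"
  show "\<bar>Zblock z n i i\<bar> \<le> Znorm z n"
  proof (cases "i < n")
    case True
    then show ?thesis by (simp add: Zblock_def abs_le_Znorm)
  next
    case False
    then have "z n (i-n) \<ge> 1"
      using assms i by simp
    then have "\<bar>1 / z n (i-n)\<bar> \<le> 1"
      by simp
    then show ?thesis
      using False Znorm_ge_1[of n z, OF assms] by (simp add: Zblock_def)
  qed
qed (simp add: Zblock_def)

lemma op_norm_le_Mmat:
  assumes "\<And>j. j < n \<Longrightarrow> z n j \<ge> 1" "n \<ge> 1" "unitary_mat n U"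
  shows "op_norm_le (2*n) (Mmat z n U) (Znorm z n)"
  using op_norm_le_mmul[OF op_norm_le_mmul[OF op_norm_le_eta op_norm_le_Zblock]
      op_norm_le_transp[OF op_norm_le_eta]] Znorm_ge_1[of n z] assms
  by (simp add: Mmat_def)

lemma mmul_diff_left:
  fixes A B :: "nat \<Rightarrow> nat \<Rightarrow> real"
  shows "mmul m (\<lambda>i j. A i j - B i j) C = (\<lambda>i j. mmul m A C i j - mmul m B C i j)"
  unfolding mmul_def by (auto simp: left_diff_distrib sum_subtractf[symmetric] intro!: ext)

lemma mmul_diff_right:
  fixes A :: "nat \<Rightarrow> nat \<Rightarrow> real"
  shows "mmul m A (\<lambda>i j. B i j - C i j) = (\<lambda>i j. mmul m A B i j - mmul m A C i j)"
  unfolding mmul_def by (auto simp: right_diff_distrib sum_subtractf[symmetric] intro!: ext)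

lemma sandwich_diff:
  fixes E F :: "nat \<Rightarrow> nat \<Rightarrow> real"
  shows "(\<lambda>i j. mmul m (mmul m E Z) (mtransp E) i j - mmul m (mmul m F Z) (mtransp F) i j)
   = (\<lambda>i j. mmul m (mmul m (\<lambda>i j. E i j - F i j) Z) (mtransp E) i j
          + mmul m (mmul m F Z) (mtransp (\<lambda>i j. E i j - F i j)) i j)"
proof -
  have transp_diff: "mtransp (\<lambda>i j. E i j - F i j) = (\<lambda>i j. mtransp E i j - mtransp F i j)"
    by (simp add: mtransp_def)
  show ?thesis
    unfolding transp_diff mmul_diff_left mmul_diff_right by simp
qed

lemma hs_norm_Mmat_diff:
  assumes "\<And>j. j < n \<Longrightarrow> z n j \<ge> 1" "n \<ge> 1" "unitary_mat n U" "unitary_mat n V"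
  shows "hs_norm (2*n) (\<lambda>i j. Mmat z n U i j - Mmat z n V i j)
    \<le> 2 * Znorm z n * (sqrt 2 * hs_dist n U V)"
proof -
  let ?E = "eta n U" and ?F = "eta n V" and ?Z = "Zblock z n" and ?m = "2*n"
  let ?D = "\<lambda>i j. ?E i j - ?F i j"
  have Z0: "Znorm z n \<ge> 0"
    using Znorm_ge_1[of n z, OF assms(1,2)] by simp
  have "hs_norm ?m (\<lambda>i j. Mmat z n U i j - Mmat z n V i j)
     \<le> hs_norm ?m (mmul ?m (mmul ?m ?D ?Z) (mtransp ?E))
       + hs_norm ?m (mmul ?m (mmul ?m ?F ?Z) (mtransp ?D))"
    unfolding Mmat_def sandwich_diff by (rule hs_norm_add)
  also have "hs_norm ?m (mmul ?m (mmul ?m ?D ?Z) (mtransp ?E)) \<le> hs_norm ?m (mmul ?m ?D ?Z) * 1"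
    by (intro hs_norm_mmul_right op_norm_le_transp op_norm_le_eta assms) auto
  also have "hs_norm ?m (mmul ?m ?D ?Z) \<le> hs_norm ?m ?D * Znorm z n"
    by (intro hs_norm_mmul_right op_norm_le_Zblock assms Z0)
  also have "hs_norm ?m (mmul ?m (mmul ?m ?F ?Z) (mtransp ?D)) \<le> (1 * Znorm z n) * hs_norm ?m (mtransp ?D)"
    by (intro hs_norm_mmul_left op_norm_le_mmul op_norm_le_eta op_norm_le_Zblock assms) (use Z0 in auto)
  finally show ?thesis
    unfolding hs_norm_transp hs_norm_eta_diff by (simp add: mult_ac)
qed

lemma mat_vec_Jmat:
  assumes "i < 2*k"
  shows "mat_vec (2*k) (Jmat k) x i = (if i < k then - x (i + k) else x (i - k))"
proof (cases "i < k")
  case True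
  have "mat_vec (2*k) (Jmat k) x i = (\<Sum>j<2*k. if j = i + k then - x (i + k) else 0)"
    unfolding mat_vec_def using True by (intro sum.cong) (auto simp: Jmat_def)
  then show ?thesis using True by simp
next
  case False
  have "mat_vec (2*k) (Jmat k) x i = (\<Sum>j<2*k. if j = i - k then x (i - k) else 0)"
    unfolding mat_vec_def using False assms by (intro sum.cong) (auto simp: Jmat_def)
  then show ?thesis using False assms by simp
qed

lemma op_norm_le_Jmat: "op_norm_le (2*k) (Jmat k) 1"
  unfolding op_norm_le_def
proof
  fix x
  have "(\<Sum>i<2*k. (mat_vec (2*k) (Jmat k) x i)\<^sup>2) = (\<Sum>i<k. (x (i + k))\<^sup>2) + (\<Sum>i<k. (x i)\<^sup>2)"
    by (simp add: sum_lessThan_double mat_vec_Jmat)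
  also have "\<dots> = (\<Sum>i<2*k. (x i)\<^sup>2)"
    by (simp add: sum_lessThan_double add.commute)
  finally show "vec_norm (2*k) (mat_vec (2*k) (Jmat k) x) \<le> 1 * vec_norm (2*k) x"
    unfolding vec_norm_def L2_set_def by simp
qed

section \<open>The Lipschitz estimate\<close>

lemma abs_fobj_diff_le:
  assumes z_ge_1: "\<And>j. j < n \<Longrightarrow> z n j \<ge> 1" and "n \<ge> 1" "k \<le> n"
    and U: "unitary_mat n U" and V: "unitary_mat n V"
  shows "\<bar>fobj z n k U - fobj z n k V\<bar>
    \<le> 16 * sqrt k * (Znorm z n)\<^sup>2 * ((Znorm z n)\<^sup>2 + (lam z n)\<^sup>2) * hs_dist n U V"
proof -
  let ?m = "2*k" and ?Z = "Znorm z n"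
  define A where "A W = mmul ?m (Jmat k) (Msub z n k W)" for W
  have Z1: "?Z \<ge> 1"
    using Znorm_ge_1[of n z] assms by blast
  have op_A: "op_norm_le ?m (A W) ?Z" if "unitary_mat n W" for W
    using op_norm_le_mmul[OF op_norm_le_Jmat op_norm_le_submatrix[OF subidx_inj subidx_range
        op_norm_le_Mmat[of n z, OF z_ge_1 \<open>n \<ge> 1\<close> that]]] assms
    by (simp add: A_def Msub_def)
  have "hs_norm ?m (\<lambda>i j. A U i j - A V i j)
      \<le> 1 * hs_norm ?m (\<lambda>i j. Msub z n k U i j - Msub z n k V i j)"
    unfolding A_def mmul_diff_right[symmetric] by (rule hs_norm_mmul_left) (auto simp: op_norm_le_Jmat)
  also have "\<dots> \<le> hs_norm (2*n) (\<lambda>i j. Mmat z n U i j - Mmat z n V i j)"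
    unfolding Msub_def using hs_norm_submatrix[OF subidx_inj subidx_range] assms by simp
  also have "\<dots> \<le> 2 * ?Z * (sqrt 2 * hs_dist n U V)"
    by (rule hs_norm_Mmat_diff[of n z, OF assms(1,2,4,5)])
  finally have A_diff: "hs_norm ?m (\<lambda>i j. A U i j - A V i j) \<le> 2 * sqrt 2 * ?Z * hs_dist n U V"
    by (simp add: mult_ac)
  have "\<bar>fobj z n k U - fobj z n k V\<bar>
      \<le> 4 * sqrt ?m * ?Z * (?Z\<^sup>2 + \<bar>(lam z n)\<^sup>2\<bar>) * hs_norm ?m (\<lambda>i j. A U i j - A V i j)"
    using abs_mtrace_quartic_diff[OF op_A[OF U] op_A[OF V], of "(lam z n)\<^sup>2"] Z1
    by (simp add: fobj_def Let_def A_def)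
  also have "\<dots> \<le> 4 * sqrt ?m * ?Z * (?Z\<^sup>2 + (lam z n)\<^sup>2) * (2 * sqrt 2 * ?Z * hs_dist n U V)"
    using mult_left_mono[OF A_diff, of "4 * sqrt ?m * ?Z * (?Z\<^sup>2 + (lam z n)\<^sup>2)"] Z1 by simp
  also have "\<dots> = 16 * sqrt k * ?Z\<^sup>2 * (?Z\<^sup>2 + (lam z n)\<^sup>2) * hs_dist n U V"
    using real_sqrt_mult[of 2 k] by (simp add: power2_eq_square)
  finally show ?thesis .
qed

lemma lipschitz_constant_growth:
  fixes x Z l B C K k \<zeta> \<kappa> :: real
  assumes "x > 0" "1 \<le> Z" "Z \<le> C * x powr \<zeta>" "\<bar>l\<bar> \<le> B" "0 \<le> k" "k \<le> K * x powr \<kappa>"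
  shows "sqrt k * Z\<^sup>2 * (Z\<^sup>2 + l\<^sup>2) \<le> C ^ 4 * sqrt K * (1 + B\<^sup>2) * x powr (4 * \<zeta> + \<kappa> / 2)"
proof -
  have "l\<^sup>2 \<le> B\<^sup>2"
    using assms(4) by (metis abs_ge_zero order_trans power2_abs power_mono)
  also have "B\<^sup>2 \<le> B\<^sup>2 * Z\<^sup>2"
    using assms(2) by (simp add: mult_le_cancel_left1 one_le_power)
  finally have "Z\<^sup>2 * (Z\<^sup>2 + l\<^sup>2) \<le> Z\<^sup>2 * (Z\<^sup>2 + B\<^sup>2 * Z\<^sup>2)"
    by (simp add: mult_left_mono)
  also have "\<dots> = Z ^ 4 * (1 + B\<^sup>2)"
    by algebra
  also have "\<dots> \<le> (C * x powr \<zeta>) ^ 4 * (1 + B\<^sup>2)"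
    using assms(2,3) by (intro mult_right_mono power_mono) auto
  finally have Z_part: "Z\<^sup>2 * (Z\<^sup>2 + l\<^sup>2) \<le> (C * x powr \<zeta>) ^ 4 * (1 + B\<^sup>2)" .
  have "sqrt k \<le> sqrt (K * x powr \<kappa>)"
    using assms(6) by simp
  also have "\<dots> = sqrt K * x powr (\<kappa> / 2)"
    using assms(1) by (simp add: real_sqrt_mult powr_half_sqrt_powr)
  finally have k_part: "sqrt k \<le> sqrt K * x powr (\<kappa> / 2)" .
  have powr_eq: "(C * x powr \<zeta>) ^ 4 * x powr (\<kappa> / 2) = C ^ 4 * x powr (4 * \<zeta> + \<kappa> / 2)"
    using assms(1) by (simp add: powr_add powr_power power_mult_distrib)
  have "sqrt k * (Z\<^sup>2 * (Z\<^sup>2 + l\<^sup>2)) \<le> sqrt K * x powr (\<kappa> / 2) * ((C * x powr \<zeta>) ^ 4 * (1 + B\<^sup>2))"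
    by (rule mult_mono[OF k_part Z_part]) (use order_trans[OF real_sqrt_ge_zero[OF assms(5)] k_part] in simp_all)
  also have "\<dots> = sqrt K * (1 + B\<^sup>2) * ((C * x powr \<zeta>) ^ 4 * x powr (\<kappa> / 2))"
    by (simp only: mult_ac)
  also have "\<dots> = C ^ 4 * sqrt K * (1 + B\<^sup>2) * x powr (4 * \<zeta> + \<kappa> / 2)"
    unfolding powr_eq by (simp only: mult_ac)
  finally show ?thesis
    by (simp add: mult.assoc)
qed

theorem lemma4:
  fixes z :: "nat \<Rightarrow> nat \<Rightarrow> real" and k :: "nat \<Rightarrow> nat" and \<zeta> \<kappa> :: real
  assumes z_ge1: "\<And>n j. j < n \<Longrightarrow> z n j \<ge> 1"
    and zeta_nonneg: "\<zeta> \<ge> 0"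
    and squeezing: "\<exists>C>0. \<exists>N. \<forall>n\<ge>N. Znorm z n \<le> C * real n powr \<zeta>"
    and lam_bounded: "\<exists>B. \<forall>n\<ge>1. \<bar>lam z n\<bar> \<le> B"
    and k_range: "\<And>n. n \<ge> 1 \<Longrightarrow> 1 \<le> k n \<and> k n \<le> n"
    and kappa_nonneg: "\<kappa> \<ge> 0"
    and k_bounded: "\<exists>K>0. \<exists>N. \<forall>n\<ge>N. real (k n) \<le> K * real n powr \<kappa>"
  shows "\<exists>C>0. \<exists>N. \<forall>n\<ge>N. \<forall>U V. unitary_mat n U \<longrightarrow> unitary_mat n V \<longrightarrow>
           \<bar>fobj z n (k n) U - fobj z n (k n) V\<bar> \<le> C * real n powr (4 * \<zeta> + \<kappa> / 2) * hs_dist n U V"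
proof -
  obtain C N\<^sub>1 where "C > 0" and C: "\<And>n. n \<ge> N\<^sub>1 \<Longrightarrow> Znorm z n \<le> C * real n powr \<zeta>"
    using squeezing by blast
  obtain B where B: "\<And>n. n \<ge> 1 \<Longrightarrow> \<bar>lam z n\<bar> \<le> B"
    using lam_bounded by blast
  obtain K N\<^sub>2 where "K > 0" and K: "\<And>n. n \<ge> N\<^sub>2 \<Longrightarrow> real (k n) \<le> K * real n powr \<kappa>"
    using k_bounded by blast
  have "\<bar>fobj z n (k n) U - fobj z n (k n) V\<bar>
      \<le> (16 * C ^ 4 * sqrt K * (1 + B\<^sup>2)) * real n powr (4 * \<zeta> + \<kappa> / 2) * hs_dist n U V"
    if n: "n \<ge> max 1 (max N\<^sub>1 N\<^sub>2)" and U: "unitary_mat n U" and V: "unitary_mat n V" for n U V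
  proof -
    have "n \<ge> 1" "n \<ge> N\<^sub>1" "n \<ge> N\<^sub>2"
      using n by auto
    have growth: "sqrt (k n) * (Znorm z n)\<^sup>2 * ((Znorm z n)\<^sup>2 + (lam z n)\<^sup>2)
        \<le> C ^ 4 * sqrt K * (1 + B\<^sup>2) * real n powr (4 * \<zeta> + \<kappa> / 2)"
      by (rule lipschitz_constant_growth[OF _ Znorm_ge_1[OF z_ge1] C B _ K])
        (use \<open>n \<ge> 1\<close> \<open>n \<ge> N\<^sub>1\<close> \<open>n \<ge> N\<^sub>2\<close> in auto)
    have "16 * sqrt (k n) * (Znorm z n)\<^sup>2 * ((Znorm z n)\<^sup>2 + (lam z n)\<^sup>2) * hs_dist n U V
        \<le> (16 * C ^ 4 * sqrt K * (1 + B\<^sup>2)) * real n powr (4 * \<zeta> + \<kappa> / 2) * hs_dist n U V"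
      using mult_right_mono[OF mult_left_mono[OF growth, of 16] hs_dist_nonneg[of n U V]]
      by (simp add: mult_ac)
    with abs_fobj_diff_le[OF z_ge1 \<open>n \<ge> 1\<close> conjunct2[OF k_range[OF \<open>n \<ge> 1\<close>]] U V]
    show ?thesis
      by (rule order_trans)
  qed
  moreover have "16 * C ^ 4 * sqrt K * (1 + B\<^sup>2) > 0"
    using \<open>C > 0\<close> \<open>K > 0\<close> by (simp add: add_pos_nonneg)
  ultimately show ?thesis
    by blast
qed

end
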